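(* With the notation below, there are no $t,u\in N'$ such that $\langle N',*',t,u\rangle$ is a partial combinatory algebra.
   Context: Let $X$ be an infinite set of variables and $T(X)$ the set of terms built from variables in $X$ and two constant symbols $s,k$ by a binary application (juxtaposition, associating to the left). Let CL be the term rewriting system with rules $sxyz\to xz(yz)$ and $kxy\to x$; CL is confluent, so every term has at most one normal form. Let $N$ be the set of CL-normal forms, and for $m,n\in N$ let $m*n$ be the normal form of $mn$ if it exists, undefined otherwise. Let $i:=skk$, $\omega:=sii$, $d:=s(k\omega)(k\omega)$. Let $\mathrm{Var}(n)$ be the set of variables of a term $n$, $L:=\{n\in N\mid n*x\text{ is defined for } x\in X\setminus\mathrm{Var}(n)\}$, $N':=L\cup\{d\}$, and let $m*'n$ be $m*n$ if this is defined and lies in $N'$, undefined otherwise. A partial combinatory algebra is a set $A$ with a partial binary operation and elements $S,K\in A$ such that for all $x,y,z\in A$: $Sxy$ is defined, $Sxyz\simeq xz(yz)$, and $Kxy$ is defined and equals $x$; here products associate to the left, a compound product is defined only if all its sub-products are defined, and $\simeq$ means: if either side is defined then both are defined and equal. *)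

theory Defs
  imports Main
begin

datatype 'v cterm = CVar 'v | CS | CK | CApp "'v cterm" "'v cterm"

inductive cl_step :: "'v cterm \<Rightarrow> 'v cterm \<Rightarrow> bool" where
  s_rule: "cl_step (CApp (CApp (CApp CS x) y) z) (CApp (CApp x z) (CApp y z))"
| k_rule: "cl_step (CApp (CApp CK x) y) x"
| app_left: "cl_step m m' \<Longrightarrow> cl_step (CApp m n) (CApp m' n)"
| app_right: "cl_step n n' \<Longrightarrow> cl_step (CApp m n) (CApp m n')"

definition cl_normal :: "'v cterm \<Rightarrow> bool" where
  "cl_normal m \<longleftrightarrow> (\<nexists>m'. cl_step m m')"

definition is_nf_of :: "'v cterm \<Rightarrow> 'v cterm \<Rightarrow> bool" where
  "is_nf_of m n \<longleftrightarrow> cl_step\<^sup>*\<^sup>* m n \<and> cl_normal n"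

definition NF :: "'v cterm set" where
  "NF = {n. cl_normal n}"

text \<open>m * n: the normal form of m n if it exists (unique by confluence), undefined otherwise\<close>
definition nf_app :: "'v cterm \<Rightarrow> 'v cterm \<Rightarrow> 'v cterm option" where
  "nf_app m n = (if \<exists>p. is_nf_of (CApp m n) p
                 then Some (THE p. is_nf_of (CApp m n) p) else None)"

fun cvars :: "'v cterm \<Rightarrow> 'v set" where
  "cvars (CVar x) = {x}"
| "cvars CS = {}"
| "cvars CK = {}"
| "cvars (CApp m n) = cvars m \<union> cvars n"

definition ci :: "'v cterm" where "ci = CApp (CApp CS CK) CK"
definition comega :: "'v cterm" where "comega = CApp (CApp CS ci) ci"
definition cd :: "'v cterm" where
  "cd = CApp (CApp CS (CApp CK comega)) (CApp CK comega)"

definition Lset :: "'v cterm set" where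
  "Lset = {n \<in> NF. \<forall>x. x \<notin> cvars n \<longrightarrow> nf_app n (CVar x) \<noteq> None}"

definition Nprime :: "'v cterm set" where
  "Nprime = Lset \<union> {cd}"

definition nf_app' :: "'v cterm \<Rightarrow> 'v cterm \<Rightarrow> 'v cterm option" where
  "nf_app' m n = (case nf_app m n of
                    Some p \<Rightarrow> (if p \<in> Nprime then Some p else None)
                  | None \<Rightarrow> None)"

fun papp :: "('a \<Rightarrow> 'a \<Rightarrow> 'a option) \<Rightarrow> 'a option \<Rightarrow> 'a option \<Rightarrow> 'a option" where
  "papp f (Some a) (Some b) = f a b"
| "papp f _ _ = None"

text \<open>(A, f, S, K) is a partial combinatory algebra. Kleene equality is equality
  of option values.\<close>
definition is_pca :: "'a set \<Rightarrow> ('a \<Rightarrow> 'a \<Rightarrow> 'a option) \<Rightarrow> 'a \<Rightarrow> 'a \<Rightarrow> bool" where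
  "is_pca A f S K \<longleftrightarrow>
     (\<forall>a\<in>A. \<forall>b\<in>A. \<forall>c. f a b = Some c \<longrightarrow> c \<in> A) \<and>
     S \<in> A \<and> K \<in> A \<and>
     (\<forall>x\<in>A. \<forall>y\<in>A. \<forall>z\<in>A.
        papp f (papp f (Some S) (Some x)) (Some y) \<noteq> None \<and>
        papp f (papp f (papp f (Some S) (Some x)) (Some y)) (Some z)
          = papp f (papp f (Some x) (Some z)) (papp f (Some y) (Some z)) \<and>
        papp f (papp f (Some K) (Some x)) (Some y) = Some x)"

end

theory Submission
  imports Defs "HOL-Library.Confluence"
begin

text \<open>Suppose \<open>t\<close> were an S-combinator of \<open>\<langle>N', *', t, u\<rangle>\<close>. Fresh variables \<open>x, y, z\<close> lie
  in \<open>N'\<close> and \<open>t *' x *' y *' z = xz(yz)\<close>, so \<open>t x y z\<close> reduces to \<open>xz(yz)\<close>; substituting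
  for the fresh variables gives \<open>t m n p \<twoheadrightarrow> mp(np)\<close> for all terms. As \<open>i a \<twoheadrightarrow> a\<close>
  and \<open>d a \<twoheadrightarrow> \<omega>\<omega>\<close>, this yields \<open>t i d a \<twoheadrightarrow> a(\<omega>\<omega>)\<close>, while the S-axiom forces
  \<open>e = t *' i *' d\<close> to exist in \<open>N'\<close>. If \<open>e = d\<close>, then \<open>t i d (k i)\<close> reduces both to the
  normal form \<open>i\<close> and to \<open>\<omega>\<omega>\<close>, which has no normal form. If \<open>e \<in> L\<close>, then for \<open>z\<close> fresh
  for \<open>e\<close> the normal form of \<open>e z\<close> would be a normal reduct of \<open>z(\<omega>\<omega>)\<close>, impossible
  again. Both contradictions rest on confluence of CL, proved via parallel reduction.\<close>

section \<open>Confluence of CL\<close>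

lemma cl_steps_app_left: "cl_step\<^sup>*\<^sup>* m m' \<Longrightarrow> cl_step\<^sup>*\<^sup>* (CApp m n) (CApp m' n)"
  by (induction rule: rtranclp_induct) (auto intro: rtranclp.rtrancl_into_rtrancl cl_step.app_left)

lemma cl_steps_app_right: "cl_step\<^sup>*\<^sup>* n n' \<Longrightarrow> cl_step\<^sup>*\<^sup>* (CApp m n) (CApp m n')"
  by (induction rule: rtranclp_induct) (auto intro: rtranclp.rtrancl_into_rtrancl cl_step.app_right)

lemma cl_steps_app:
  "cl_step\<^sup>*\<^sup>* m m' \<Longrightarrow> cl_step\<^sup>*\<^sup>* n n' \<Longrightarrow> cl_step\<^sup>*\<^sup>* (CApp m n) (CApp m' n')"
  by (meson cl_steps_app_left cl_steps_app_right rtranclp_trans)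

inductive par :: "'v cterm \<Rightarrow> 'v cterm \<Rightarrow> bool" where
  par_var: "par (CVar x) (CVar x)"
| par_S: "par CS CS"
| par_K: "par CK CK"
| par_app: "par m m' \<Longrightarrow> par n n' \<Longrightarrow> par (CApp m n) (CApp m' n')"
| par_s_rule: "par x x' \<Longrightarrow> par y y' \<Longrightarrow> par z z' \<Longrightarrow>
    par (CApp (CApp (CApp CS x) y) z) (CApp (CApp x' z') (CApp y' z'))"
| par_k_rule: "par x x' \<Longrightarrow> par (CApp (CApp CK x) y) x'"

lemma par_refl: "par m m"
  by (induction m) (auto intro: par.intros)

lemma cl_step_imp_par: "cl_step m n \<Longrightarrow> par m n"
  by (induction rule: cl_step.induct) (auto intro: par.intros par_refl)

lemma par_imp_cl_steps: "par m n \<Longrightarrow> cl_step\<^sup>*\<^sup>* m n"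
proof (induction rule: par.induct)
  case (par_s_rule x x' y y' z z')
  then have "cl_step\<^sup>*\<^sup>* (CApp (CApp (CApp CS x) y) z) (CApp (CApp (CApp CS x') y') z')"
    by (simp add: cl_steps_app)
  also have "cl_step \<dots> (CApp (CApp x' z') (CApp y' z'))"
    by (rule cl_step.s_rule)
  finally show ?case .
next
  case (par_k_rule x x' y)
  then have "cl_step\<^sup>*\<^sup>* (CApp (CApp CK x) y) (CApp (CApp CK x') y)"
    by (simp add: cl_steps_app)
  also have "cl_step \<dots> x'"
    by (rule cl_step.k_rule)
  finally show ?case .
qed (auto simp: cl_steps_app)

lemma rtranclp_par_eq: "par\<^sup>*\<^sup>* = cl_step\<^sup>*\<^sup>*"
  by (rule rtranclp_subset) (auto intro: cl_step_imp_par dest: par_imp_cl_steps)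

fun complete_development :: "'v cterm \<Rightarrow> 'v cterm" where
  "complete_development (CApp (CApp (CApp CS x) y) z) =
     CApp (CApp (complete_development x) (complete_development z))
          (CApp (complete_development y) (complete_development z))"
| "complete_development (CApp (CApp CK x) y) = complete_development x"
| "complete_development (CApp m n) = CApp (complete_development m) (complete_development n)"
| "complete_development m = m"

inductive_cases par_SE: "par CS m"
inductive_cases par_KE: "par CK m"
inductive_cases par_S_appE: "par (CApp CS x) m"
inductive_cases par_K_appE: "par (CApp CK x) m"
inductive_cases par_S_app_appE: "par (CApp (CApp CS x) y) m"

lemma par_complete_development: "par m n \<Longrightarrow> par n (complete_development m)"
proof (induction rule: par.induct)
  case (par_app m m' n n')
  consider x y where "m = CApp (CApp CS x) y" | x where "m = CApp CK x"
    | "complete_development (CApp m n) = CApp (complete_development m) (complete_development n)"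
    by (cases m rule: complete_development.cases) auto
  then show ?case
  proof cases
    case (1 x y)
    with par_app.hyps(1) obtain x' y' where m': "m' = CApp (CApp CS x') y'"
      by (auto elim!: par_S_app_appE par_S_appE par_SE)
    from par_app.IH(1) 1 m' have "par x' (complete_development x)" "par y' (complete_development y)"
      by (auto elim!: par_S_app_appE par_S_appE par_SE)
    with 1 m' par_app.IH(2) show ?thesis
      by (auto intro: par.intros)
  next
    case (2 x)
    with par_app.hyps(1) obtain x' where m': "m' = CApp CK x'"
      by (auto elim!: par_K_appE par_KE)
    from par_app.IH(1) 2 m' have "par x' (complete_development x)"
      by (auto elim!: par_K_appE par_KE)
    with 2 m' show ?thesis
      by (auto intro: par.intros)
  next
    case 3
    with par_app.IH show ?thesis
      by (auto intro: par.intros)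
  qed
qed (auto intro: par.intros)

lemma confluentp_par: "confluentp par"
proof (rule strong_confluentp_imp_confluentp, rule strong_confluentpI)
  fix m a b assume "par m a" "par m b"
  then show "\<exists>c. par\<^sup>*\<^sup>* a c \<and> par\<^sup>=\<^sup>= b c"
    by (meson par_complete_development r_into_rtranclp sup2I1)
qed

lemma confluentp_cl_step: "confluentp cl_step"
  using confluentp_par by (simp add: confluentp_def rtranclp_conversep rtranclp_par_eq)

lemma cl_normal_cl_steps_eq: "cl_normal p \<Longrightarrow> cl_step\<^sup>*\<^sup>* p q \<Longrightarrow> q = p"
  unfolding cl_normal_def by (auto elim: converse_rtranclpE)

lemma cl_steps_to_nf: "cl_step\<^sup>*\<^sup>* m a \<Longrightarrow> is_nf_of m p \<Longrightarrow> cl_step\<^sup>*\<^sup>* a p"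
  unfolding is_nf_of_def
  by (metis confluentpD[OF confluentp_cl_step] cl_normal_cl_steps_eq)

lemma is_nf_of_unique: "is_nf_of m p \<Longrightarrow> is_nf_of m q \<Longrightarrow> p = q"
  by (metis cl_steps_to_nf cl_normal_cl_steps_eq is_nf_of_def)

lemma nf_app_eq_Some_iff: "nf_app m n = Some p \<longleftrightarrow> is_nf_of (CApp m n) p"
  unfolding nf_app_def by (auto intro: theI the_equality is_nf_of_unique)

lemma nf_app'_eq_Some_iff: "nf_app' m n = Some p \<longleftrightarrow> is_nf_of (CApp m n) p \<and> p \<in> Nprime"
  using nf_app_eq_Some_iff[of m n] unfolding nf_app'_def
  by (cases "nf_app m n") (auto dest: is_nf_of_unique)

lemma nf_app'_cl_normal:
  "cl_normal (CApp m n) \<Longrightarrow> CApp m n \<in> Nprime \<Longrightarrow> nf_app' m n = Some (CApp m n)"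
  by (simp add: nf_app'_eq_Some_iff is_nf_of_def)

fun is_redex :: "'v cterm \<Rightarrow> bool" where
  "is_redex (CApp (CApp (CApp CS x) y) z) = True"
| "is_redex (CApp (CApp CK x) y) = True"
| "is_redex _ = False"

lemma cl_normal_CVar [simp]: "cl_normal (CVar x)"
  and cl_normal_CS [simp]: "cl_normal CS"
  and cl_normal_CK [simp]: "cl_normal CK"
  unfolding cl_normal_def by (auto elim: cl_step.cases)

lemma cl_normal_CApp [simp]:
  "cl_normal (CApp m n) \<longleftrightarrow> cl_normal m \<and> cl_normal n \<and> \<not> is_redex (CApp m n)"
proof -
  have "is_redex m \<Longrightarrow> \<exists>m'. cl_step m m'" for m :: "'v cterm"
    by (induction m rule: is_redex.induct) (auto intro: cl_step.intros)
  moreover have "cl_step (CApp m n) m' \<Longrightarrow>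
      is_redex (CApp m n) \<or> (\<exists>m''. cl_step m m'') \<or> (\<exists>n'. cl_step n n')" for m'
    by (cases rule: cl_step.cases) auto
  ultimately show ?thesis
    unfolding cl_normal_def by (meson cl_step.app_left cl_step.app_right)
qed

lemma cl_normal_ci [simp]: "cl_normal ci"
  and cl_normal_comega [simp]: "cl_normal comega"
  by (simp_all add: comega_def ci_def)

lemma cl_steps_CVar_app:
  "cl_step\<^sup>*\<^sup>* (CApp (CVar x) m) n \<Longrightarrow> \<exists>m'. n = CApp (CVar x) m' \<and> cl_step\<^sup>*\<^sup>* m m'"
proof (induction rule: rtranclp_induct)
  case (step n n')
  then obtain m' where m': "n = CApp (CVar x) m'" "cl_step\<^sup>*\<^sup>* m m'"
    by blast
  from step.hyps(2)[unfolded m'(1)] show ?case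
  proof (cases rule: cl_step.cases)
    case (app_right m'')
    with m' show ?thesis
      by (auto intro: rtranclp.rtrancl_into_rtrancl)
  qed (metis cl_normal_CVar cl_normal_def)
qed auto

section \<open>\<open>\<omega>\<omega>\<close> has no normal form\<close>

text \<open>Every reduct of \<open>\<omega>\<omega>\<close> is an application of two terms built from \<open>\<omega>\<close> by the
  constructors below; such an application always contains a redex.\<close>

inductive omega_like :: "'v cterm \<Rightarrow> bool" where
  omega_like_comega: "omega_like comega"
| omega_like_ci_app: "omega_like a \<Longrightarrow> omega_like (CApp ci a)"
| omega_like_CK_app: "omega_like a \<Longrightarrow> omega_like (CApp (CApp CK a) b)"

inductive_cases cl_step_CKE: "cl_step CK m"
inductive_cases cl_step_CK_appE: "cl_step (CApp CK x) m"

lemma omega_like_cl_step: "omega_like a \<Longrightarrow> cl_step a a' \<Longrightarrow> omega_like a'"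
proof (induction arbitrary: a' rule: omega_like.induct)
  case omega_like_comega
  then show ?case
    using cl_normal_comega cl_normal_def by metis
next
  case (omega_like_ci_app a)
  from omega_like_ci_app.prems show ?case
  proof (cases rule: cl_step.cases)
    case app_left
    then show ?thesis
      using cl_normal_ci cl_normal_def by metis
  next
    case (app_right n')
    with omega_like_ci_app.IH show ?thesis
      by (auto intro: omega_like.intros)
  qed (use omega_like_ci_app in \<open>auto simp: ci_def intro: omega_like.intros\<close>)
next
  case (omega_like_CK_app a b)
  from omega_like_CK_app.prems show ?case
    by (cases rule: cl_step.cases)
      (use omega_like_CK_app in \<open>auto elim!: cl_step_CK_appE cl_step_CKE intro: omega_like.intros\<close>)
qed

lemma omega_like_app_cl_step:
  assumes "omega_like a" "omega_like b" "cl_step (CApp a b) m"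
  shows "\<exists>a' b'. m = CApp a' b' \<and> omega_like a' \<and> omega_like b'"
  using assms(3)
proof (cases rule: cl_step.cases)
  case s_rule
  from assms(1) have "a = comega"
    using s_rule by (cases rule: omega_like.cases) (auto simp: ci_def)
  with s_rule assms(2) show ?thesis
    by (auto simp: comega_def intro: omega_like.intros)
next
  case k_rule
  from assms(1) show ?thesis
    using k_rule by (cases rule: omega_like.cases) (auto simp: ci_def comega_def)
qed (use assms omega_like_cl_step in blast)+

lemma omega_like_app_not_cl_normal:
  "omega_like a \<Longrightarrow> \<not> cl_normal (CApp a b)"
  by (cases rule: omega_like.cases) (auto simp: ci_def comega_def)

lemma comega_comega_no_nf: "cl_step\<^sup>*\<^sup>* (CApp comega comega) m \<Longrightarrow> \<not> cl_normal m"
proof -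
  assume "cl_step\<^sup>*\<^sup>* (CApp comega comega) m"
  then have "\<exists>a b. m = CApp a b \<and> omega_like a \<and> omega_like b"
    by (induction rule: rtranclp_induct)
      (auto intro: omega_like.intros dest: omega_like_app_cl_step)
  then show ?thesis
    using omega_like_app_not_cl_normal by blast
qed

fun csubst :: "('v \<Rightarrow> 'v cterm) \<Rightarrow> 'v cterm \<Rightarrow> 'v cterm" where
  "csubst \<sigma> (CVar x) = \<sigma> x"
| "csubst \<sigma> CS = CS"
| "csubst \<sigma> CK = CK"
| "csubst \<sigma> (CApp m n) = CApp (csubst \<sigma> m) (csubst \<sigma> n)"

lemma cl_step_csubst: "cl_step m n \<Longrightarrow> cl_step (csubst \<sigma> m) (csubst \<sigma> n)"
  by (induction rule: cl_step.induct) (auto intro: cl_step.intros)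

lemma cl_steps_csubst: "cl_step\<^sup>*\<^sup>* m n \<Longrightarrow> cl_step\<^sup>*\<^sup>* (csubst \<sigma> m) (csubst \<sigma> n)"
  by (induction rule: rtranclp_induct) (auto intro: rtranclp.rtrancl_into_rtrancl cl_step_csubst)

lemma csubst_id_on_cvars: "(\<And>x. x \<in> cvars m \<Longrightarrow> \<sigma> x = CVar x) \<Longrightarrow> csubst \<sigma> m = m"
  by (induction m) auto

lemma finite_cvars: "finite (cvars m)"
  by (induction m) auto

lemma cl_normal_in_Nprime:
  "cl_normal m \<Longrightarrow> (\<And>x. cl_normal (CApp m (CVar x))) \<Longrightarrow> m \<in> Nprime"
  by (auto simp: Nprime_def Lset_def NF_def nf_app_eq_Some_iff is_nf_of_def)

lemma ci_app_cl_steps: "cl_step\<^sup>*\<^sup>* (CApp ci a) a"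
proof -
  have "cl_step (CApp ci a) (CApp (CApp CK a) (CApp CK a))"
    unfolding ci_def by (rule cl_step.s_rule)
  also have "cl_step\<^sup>*\<^sup>* \<dots> a"
    by (rule r_into_rtranclp, rule cl_step.k_rule)
  finally show ?thesis .
qed

lemma cd_app_cl_steps: "cl_step\<^sup>*\<^sup>* (CApp cd a) (CApp comega comega)"
proof -
  have "cl_step (CApp cd a) (CApp (CApp (CApp CK comega) a) (CApp (CApp CK comega) a))"
    unfolding cd_def by (rule cl_step.s_rule)
  also have "cl_step\<^sup>*\<^sup>* \<dots> (CApp comega comega)"
    by (intro cl_steps_app) (auto intro: cl_step.k_rule)
  finally show ?thesis .
qed

lemma ci_in_Nprime: "(ci :: 'v cterm) \<in> Nprime"
proof -
  have "nf_app (ci :: 'v cterm) (CVar x) = Some (CVar x)" for x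
    by (simp add: nf_app_eq_Some_iff is_nf_of_def ci_app_cl_steps)
  then show ?thesis
    by (simp add: Nprime_def Lset_def NF_def)
qed

lemma cd_in_Nprime: "cd \<in> Nprime"
  by (simp add: Nprime_def)

lemma papp_nf_app'_in_Nprime: "papp nf_app' A B = Some r \<Longrightarrow> r \<in> Nprime"
  by (cases A; cases B) (auto simp: nf_app'_eq_Some_iff)

text \<open>Stated with object-level quantifiers so that \<open>intro\<close> can chain it through nested products.\<close>

lemma papp_nf_app'_cl_steps:
  assumes "\<forall>a. A = Some a \<longrightarrow> cl_step\<^sup>*\<^sup>* m a" and "\<forall>b. B = Some b \<longrightarrow> cl_step\<^sup>*\<^sup>* n b"
  shows "\<forall>r. papp nf_app' A B = Some r \<longrightarrow> cl_step\<^sup>*\<^sup>* (CApp m n) r"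
proof (intro allI impI)
  fix r assume "papp nf_app' A B = Some r"
  then obtain a b where ab: "A = Some a" "B = Some b" "nf_app' a b = Some r"
    by (cases A; cases B) auto
  with assms have "cl_step\<^sup>*\<^sup>* (CApp m n) (CApp a b)"
    by (simp add: cl_steps_app)
  with ab(3) show "cl_step\<^sup>*\<^sup>* (CApp m n) r"
    by (auto simp: nf_app'_eq_Some_iff is_nf_of_def)
qed

lemma is_pca_S_cl_steps:
  assumes "infinite (UNIV :: 'v set)" and "is_pca Nprime nf_app' s k"
  shows "cl_step\<^sup>*\<^sup>* (CApp (CApp (CApp s m) n) p) (CApp (CApp m p) (CApp (n :: 'v cterm) p))"
proof -
  obtain x where x: "x \<notin> cvars s"
    using ex_new_if_finite[OF assms(1) finite_cvars] by blast
  obtain y where y: "y \<notin> insert x (cvars s)"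
    using ex_new_if_finite[OF assms(1)] by (meson finite_cvars finite_insert)
  obtain z where z: "z \<notin> insert x (insert y (cvars s))"
    using ex_new_if_finite[OF assms(1)] by (meson finite_cvars finite_insert)
  define X Y Z where "X = CVar x" and "Y = CVar y" and "Z = CVar z"
  have "X \<in> Nprime" "Y \<in> Nprime" "Z \<in> Nprime"
    by (auto simp: X_def Y_def Z_def intro: cl_normal_in_Nprime)
  with assms(2) have "papp nf_app' (papp nf_app' (papp nf_app' (Some s) (Some X)) (Some Y)) (Some Z)
      = papp nf_app' (papp nf_app' (Some X) (Some Z)) (papp nf_app' (Some Y) (Some Z))"
    unfolding is_pca_def by blast
  also have "\<dots> = Some (CApp (CApp X Z) (CApp Y Z))"
    by (simp add: X_def Y_def Z_def nf_app'_cl_normal cl_normal_in_Nprime)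
  moreover have "\<forall>r. papp nf_app' (papp nf_app' (papp nf_app' (Some s) (Some X)) (Some Y)) (Some Z)
      = Some r \<longrightarrow> cl_step\<^sup>*\<^sup>* (CApp (CApp (CApp s X) Y) Z) r"
    by (intro papp_nf_app'_cl_steps) auto
  ultimately have red: "cl_step\<^sup>*\<^sup>* (CApp (CApp (CApp s X) Y) Z) (CApp (CApp X Z) (CApp Y Z))"
    by simp
  define \<sigma> where
    "\<sigma> = (\<lambda>v. if v = x then m else if v = y then n else if v = z then p else CVar v)"
  have "csubst \<sigma> s = s"
    using x y z by (intro csubst_id_on_cvars) (auto simp: \<sigma>_def)
  moreover have "\<sigma> x = m" "\<sigma> y = n" "\<sigma> z = p"
    using y z by (auto simp: \<sigma>_def)
  ultimately show ?thesis
    using cl_steps_csubst[OF red, of \<sigma>] by (simp add: X_def Y_def Z_def)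
qed

lemma omega_applicator_reduct_notin_Nprime:
  assumes "infinite (UNIV :: 'v set)"
    and applies: "\<And>a. cl_step\<^sup>*\<^sup>* (CApp P a) (CApp a (CApp comega comega))"
    and P_e: "cl_step\<^sup>*\<^sup>* P (e :: 'v cterm)"
  shows "e \<notin> Nprime"
proof
  assume "e \<in> Nprime"
  then consider "e = cd" | "e \<in> Lset"
    by (auto simp: Nprime_def)
  then show False
  proof cases
    case 1
    have "cl_step\<^sup>*\<^sup>* (CApp P (CApp CK ci)) (CApp (CApp CK ci) (CApp comega comega))"
      by (rule applies)
    also have "cl_step\<^sup>*\<^sup>* \<dots> ci"
      by (rule r_into_rtranclp, rule cl_step.k_rule)
    finally have "is_nf_of (CApp P (CApp CK ci)) ci"
      by (simp add: is_nf_of_def)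
    moreover have "cl_step\<^sup>*\<^sup>* (CApp P (CApp CK ci)) (CApp comega comega)"
      using cl_steps_app_left[OF P_e] cd_app_cl_steps 1 by (metis rtranclp_trans)
    ultimately have "cl_step\<^sup>*\<^sup>* (CApp comega comega) (ci :: 'v cterm)"
      by (rule cl_steps_to_nf[rotated])
    then show False
      using comega_comega_no_nf cl_normal_ci by blast
  next
    case 2
    obtain x where "x \<notin> cvars e"
      using ex_new_if_finite[OF assms(1) finite_cvars] by blast
    with 2 obtain q where q: "is_nf_of (CApp e (CVar x)) q"
      by (auto simp: Lset_def nf_app_eq_Some_iff)
    then have "is_nf_of (CApp P (CVar x)) q"
      using cl_steps_app_left[OF P_e] unfolding is_nf_of_def by (metis rtranclp_trans)
    with applies have "cl_step\<^sup>*\<^sup>* (CApp (CVar x) (CApp comega comega)) q"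
      by (rule cl_steps_to_nf)
    then obtain m where "q = CApp (CVar x) m" "cl_step\<^sup>*\<^sup>* (CApp comega comega) m"
      by (blast dest: cl_steps_CVar_app)
    with q show False
      using comega_comega_no_nf unfolding is_nf_of_def by auto
  qed
qed

theorem proposition5p3:
  assumes "infinite (UNIV :: 'v set)"
  shows "\<not> (\<exists>t u :: 'v cterm. t \<in> Nprime \<and> u \<in> Nprime \<and> is_pca Nprime nf_app' t u)"
proof
  assume "\<exists>t u :: 'v cterm. t \<in> Nprime \<and> u \<in> Nprime \<and> is_pca Nprime nf_app' t u"
  then obtain t u :: "'v cterm" where pca: "is_pca Nprime nf_app' t u"
    by blast
  then obtain e where e: "papp nf_app' (papp nf_app' (Some t) (Some ci)) (Some cd) = Some e"
    using ci_in_Nprime cd_in_Nprime unfolding is_pca_def by blast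
  have "\<forall>r. papp nf_app' (papp nf_app' (Some t) (Some ci)) (Some cd) = Some r
      \<longrightarrow> cl_step\<^sup>*\<^sup>* (CApp (CApp t ci) cd) r"
    by (intro papp_nf_app'_cl_steps) auto
  with e have "cl_step\<^sup>*\<^sup>* (CApp (CApp t ci) cd) e"
    by blast
  moreover have "cl_step\<^sup>*\<^sup>* (CApp (CApp (CApp t ci) cd) a) (CApp a (CApp comega comega))" for a
    using is_pca_S_cl_steps[OF assms pca] cl_steps_app[OF ci_app_cl_steps cd_app_cl_steps]
    by (rule rtranclp_trans)
  ultimately have "e \<notin> Nprime"
    by (intro omega_applicator_reduct_notin_Nprime[OF assms])
  with e show False
    using papp_nf_app'_in_Nprime by blast
qed

end
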